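(* Let $\gamma\geq0$, $G=(V,E,\omega)\in\mathcal C_\gamma$, $u_0,v_0\in\mathcal V$, and let $u,v:[0,\infty)\to\mathcal V$ be the solutions (continuously differentiable in $t$) of $\frac{du}{dt}=-Lu$, $u(0)=u_0$ and $\frac{dv}{dt}=-Lv$, $v(0)=v_0$. If $(u_0)_i\leq(v_0)_i$ for all $i\in V$, then $u_i(t)\leq v_i(t)$ for all $t\geq0$ and all $i\in V$.
   Context: $\mathcal{G}$ is the set of finite, simple, connected, undirected, edge-weighted graphs $G=(V,E,\omega)$ with $V=\{1,\dots,n\}$, $n\geq2$, weights $\omega_{ij}=\omega_{ji}>0$ on edges, $0$ otherwise. $d_i=\sum_j\omega_{ij}$. $\mathcal V$: functions $V\to\mathbb R$. Fixed $r\in[0,1]$: $(\Delta u)_i=d_i^{-r}\sum_j\omega_{ij}(u_i-u_j)$, $\mathcal M(u)=\sum_id_i^ru_i$, $\mathrm{vol}(V)=\sum_id_i^r$, $\mathcal A(u)=\frac{\mathcal M(u)}{\mathrm{vol}(V)}\chi_V$. For $u\in\mathcal V$ let $\varphi$ be the unique solution of $\Delta\varphi=u-\mathcal A(u)$, $\mathcal M(\varphi)=0$, and $Lu:=\Delta u+\gamma\varphi$ (a linear operator on $\mathcal V$). For a proper subset $S\subsetneq V$, the equilibrium measure $\nu^S$ is the unique $\nu\in\mathcal V$ with $(\Delta\nu)_i=1$ on $S$ and $\nu_i=0$ off $S$. $f^j:=\nu^{V\setminus\{j\}}-\mathcal A(\nu^{V\setminus\{j\}})$. $\mathcal C^0=\{G\in\mathcal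 G:\forall j\ \forall i\neq j:\ \omega_{ij}>0\text{ or }f^j_i\geq0\}$; for $\gamma>0$, $\mathcal C_\gamma=\{G\in\mathcal C^0:\forall j\ \forall i\neq j:\ \omega_{ij}=0\text{ or }d_i^{-r}\omega_{ij}+\gamma\frac{d_j^r}{\mathrm{vol}(V)}f^j_i>0\}$; $\mathcal C_0:=\mathcal G$. *)

theory Defs
  imports "HOL-Analysis.Analysis"
begin

text \<open>A graph is given by n and a weight function w on V = {1..n}.
  Functions on V are represented as nat => real; only values on {1..n} matter.\<close>

definition Vset :: "nat \<Rightarrow> nat set" where
  "Vset n = {1..n}"

definition is_graph :: "nat \<Rightarrow> (nat \<Rightarrow> nat \<Rightarrow> real) \<Rightarrow> bool" where
  "is_graph n w \<longleftrightarrow> n \<ge> 2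
     \<and> (\<forall>i j. w i j = w j i)
     \<and> (\<forall>i j. w i j \<ge> 0)
     \<and> (\<forall>i. w i i = 0)
     \<and> (\<forall>i j. (i \<notin> Vset n \<or> j \<notin> Vset n) \<longrightarrow> w i j = 0)
     \<and> (\<forall>i\<in>Vset n. \<forall>j\<in>Vset n. (\<lambda>a b. w a b > 0)\<^sup>*\<^sup>* i j)"

definition deg :: "nat \<Rightarrow> (nat \<Rightarrow> nat \<Rightarrow> real) \<Rightarrow> nat \<Rightarrow> real" where
  "deg n w i = (\<Sum>j\<in>Vset n. w i j)"

definition lap :: "real \<Rightarrow> nat \<Rightarrow> (nat \<Rightarrow> nat \<Rightarrow> real) \<Rightarrow> (nat \<Rightarrow> real) \<Rightarrow> nat \<Rightarrow> real" where
  "lap r n w u i = deg n w i powr (- r) * (\<Sum>j\<in>Vset n. w i j * (u i - u j))"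

definition mass :: "real \<Rightarrow> nat \<Rightarrow> (nat \<Rightarrow> nat \<Rightarrow> real) \<Rightarrow> (nat \<Rightarrow> real) \<Rightarrow> real" where
  "mass r n w u = (\<Sum>i\<in>Vset n. deg n w i powr r * u i)"

definition vol :: "real \<Rightarrow> nat \<Rightarrow> (nat \<Rightarrow> nat \<Rightarrow> real) \<Rightarrow> real" where
  "vol r n w = (\<Sum>i\<in>Vset n. deg n w i powr r)"

definition avg :: "real \<Rightarrow> nat \<Rightarrow> (nat \<Rightarrow> nat \<Rightarrow> real) \<Rightarrow> (nat \<Rightarrow> real) \<Rightarrow> nat \<Rightarrow> real" where
  "avg r n w u i = (if i \<in> Vset n then mass r n w u / vol r n w else 0)"

text \<open>Functions supported on V (canonical representatives of elements of the space of functions on V).\<close>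
definition onV :: "nat \<Rightarrow> (nat \<Rightarrow> real) \<Rightarrow> bool" where
  "onV n u \<longleftrightarrow> (\<forall>i. i \<notin> Vset n \<longrightarrow> u i = 0)"

definition phi :: "real \<Rightarrow> nat \<Rightarrow> (nat \<Rightarrow> nat \<Rightarrow> real) \<Rightarrow> (nat \<Rightarrow> real) \<Rightarrow> nat \<Rightarrow> real" where
  "phi r n w u = (THE p. onV n p \<and> (\<forall>i\<in>Vset n. lap r n w p i = u i - avg r n w u i)
                        \<and> mass r n w p = 0)"

definition Lop :: "real \<Rightarrow> real \<Rightarrow> nat \<Rightarrow> (nat \<Rightarrow> nat \<Rightarrow> real) \<Rightarrow> (nat \<Rightarrow> real) \<Rightarrow> nat \<Rightarrow> real" where
  "Lop r \<gamma> n w u i = lap r n w u i + \<gamma> * phi r n w u i"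

definition eqmeas :: "real \<Rightarrow> nat \<Rightarrow> (nat \<Rightarrow> nat \<Rightarrow> real) \<Rightarrow> nat set \<Rightarrow> nat \<Rightarrow> real" where
  "eqmeas r n w S = (THE \<nu>. onV n \<nu> \<and> (\<forall>i\<in>S. lap r n w \<nu> i = 1)
                          \<and> (\<forall>i\<in>Vset n - S. \<nu> i = 0))"

definition fj :: "real \<Rightarrow> nat \<Rightarrow> (nat \<Rightarrow> nat \<Rightarrow> real) \<Rightarrow> nat \<Rightarrow> nat \<Rightarrow> real" where
  "fj r n w j i = eqmeas r n w (Vset n - {j}) i - avg r n w (eqmeas r n w (Vset n - {j})) i"

definition C0 :: "real \<Rightarrow> nat \<Rightarrow> (nat \<Rightarrow> nat \<Rightarrow> real) \<Rightarrow> bool" where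
  "C0 r n w \<longleftrightarrow> is_graph n w \<and>
     (\<forall>j\<in>Vset n. \<forall>i\<in>Vset n. i \<noteq> j \<longrightarrow> w i j > 0 \<or> fj r n w j i \<ge> 0)"

text \<open>C_gamma for gamma > 0, and C_0 = all graphs.\<close>
definition Cgamma :: "real \<Rightarrow> real \<Rightarrow> nat \<Rightarrow> (nat \<Rightarrow> nat \<Rightarrow> real) \<Rightarrow> bool" where
  "Cgamma r \<gamma> n w \<longleftrightarrow>
     (if \<gamma> = 0 then is_graph n w
      else C0 r n w \<and>
        (\<forall>j\<in>Vset n. \<forall>i\<in>Vset n. i \<noteq> j \<longrightarrow> w i j = 0 \<or>
           deg n w i powr (- r) * w i j + \<gamma> * deg n w j powr r / vol r n w * fj r n w j i > 0))"

end

theory Submission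
  imports Defs "Jordan_Normal_Form.Determinant"
begin

text \<open>The maps \<open>u \<mapsto> \<Delta>u\<close> and \<open>u \<mapsto> \<phi>\<close> are linear; explicitly
  \<open>\<phi>(u) = - \<Sum>\<^sub>j d\<^sub>j\<^sup>r / vol(V) u\<^sub>j f\<^sup>j\<close>, because \<open>f\<^sup>j\<close> has mass zero and
  \<open>\<Delta>f\<^sup>j = 1 - vol(V) / d\<^sub>j\<^sup>r \<chi>\<^bsub>{j}\<^esub>\<close> on \<open>V\<close>. Hence \<open>-L\<close> is a matrix whose
  off-diagonal entries \<open>d\<^sub>i\<^sup>-\<^sup>r \<omega>\<^sub>i\<^sub>j + \<gamma> d\<^sub>j\<^sup>r / vol(V) f\<^sup>j\<^sub>i\<close> are nonnegative precisely
  by the conditions defining \<open>C\<^sub>\<gamma>\<close>. A linear ODE with such a (Metzler) matrix keeps the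
  nonnegative orthant invariant, and applying this to \<open>v - u\<close> gives the comparison principle.
  The equilibrium measures exist because, by the maximum principle on the connected graph,
  the Dirichlet problem has trivial kernel.\<close>

section \<open>Positivity for linear ODEs with a Metzler matrix\<close>

lemma positivity_barrier:
  fixes p :: "'a \<Rightarrow> real \<Rightarrow> real"
  assumes A: "finite A"
    and cont: "\<And>j. j \<in> A \<Longrightarrow> continuous_on {0..} (p j)"
    and init: "\<And>j. j \<in> A \<Longrightarrow> p j 0 > 0"
    and push: "\<And>j s. j \<in> A \<Longrightarrow> s > 0 \<Longrightarrow> p j s = 0 \<Longrightarrow> (\<forall>l\<in>A. p l s \<ge> 0) \<Longrightarrow>
        \<exists>D>0. (p j has_real_derivative D) (at s)"
    and t: "t \<ge> 0" and i: "i \<in> A"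
  shows "p i t > 0"
proof (rule ccontr)
  assume "\<not> p i t > 0"
  define S where "S = (\<Union>j\<in>A. {s \<in> {0..t}. p j s \<le> 0})"
  have "closed S"
    unfolding S_def
  proof (intro closed_UN[OF A] ballI)
    fix j assume "j \<in> A"
    then have "continuous_on {0..t} (p j)" by (rule continuous_on_subset[OF cont]) auto
    then show "closed {s \<in> {0..t}. p j s \<le> 0}"
      using continuous_on_closed_Collect_le[of "{0..t}" "p j" "\<lambda>_. 0"] by auto
  qed
  moreover have "t \<in> S" using \<open>\<not> p i t > 0\<close> t i unfolding S_def by (auto simp: not_less)
  moreover have bdd: "bdd_below S" unfolding S_def by (auto intro: bdd_belowI[of _ 0])
  ultimately have "Inf S \<in> S" by (intro closed_contains_Inf) auto
  define t1 where "t1 = Inf S"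
  obtain j where j: "j \<in> A" "p j t1 \<le> 0" "0 \<le> t1" "t1 \<le> t"
    using \<open>Inf S \<in> S\<close> unfolding t1_def S_def by auto
  have before: "p l s > 0" if "l \<in> A" "0 \<le> s" "s < t1" for l s
  proof (rule ccontr)
    assume "\<not> p l s > 0"
    with that j have "s \<in> S" unfolding S_def by (auto simp: not_less)
    then have "t1 \<le> s" unfolding t1_def using bdd by (rule cInf_lower)
    with that show False by simp
  qed
  have "t1 > 0" using j init[of j] by (cases "t1 = 0") auto
  have "p l t1 \<ge> 0" if l: "l \<in> A" for l
  proof (rule tendsto_lowerbound)
    have "continuous_on {0<..} (p l)" by (rule continuous_on_subset[OF cont[OF l]]) auto
    then have "isCont (p l) t1" using \<open>t1 > 0\<close> by (simp add: continuous_on_eq_continuous_at)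
    then show "(p l \<longlongrightarrow> p l t1) (at_left t1)"
      unfolding isCont_def by (rule tendsto_within_subset) auto
    show "\<forall>\<^sub>F s in at_left t1. 0 \<le> p l s"
      using eventually_at_left_real[OF \<open>t1 > 0\<close>]
      by eventually_elim (use before[OF l] in \<open>auto intro: less_imp_le\<close>)
  qed simp
  with j have "p j t1 = 0" by (simp add: order_antisym)
  with push obtain D where "D > 0" "(p j has_real_derivative D) (at t1)"
    using j \<open>t1 > 0\<close> \<open>\<And>l. l \<in> A \<Longrightarrow> p l t1 \<ge> 0\<close> by blast
  from DERIV_pos_inc_left[OF this(2,1)] obtain d
    where "d > 0" "\<And>h. h > 0 \<Longrightarrow> h < d \<Longrightarrow> p j (t1 - h) < p j t1" by blast
  with \<open>p j t1 = 0\<close> \<open>t1 > 0\<close> have "p j (t1 - min d t1 / 2) < 0" by simp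
  with before[OF j(1), of "t1 - min d t1 / 2"] \<open>t1 > 0\<close> \<open>d > 0\<close> show False by linarith
qed

lemma metzler_linear_ode_nonneg:
  fixes z :: "real \<Rightarrow> 'a \<Rightarrow> real" and Q :: "'a \<Rightarrow> 'a \<Rightarrow> real"
  assumes A: "finite A"
    and ode: "\<And>t i. t \<ge> 0 \<Longrightarrow> i \<in> A \<Longrightarrow>
        ((\<lambda>s. z s i) has_real_derivative (\<Sum>j\<in>A. Q i j * z t j)) (at t within {0..})"
    and Q: "\<And>i j. i \<in> A \<Longrightarrow> j \<in> A \<Longrightarrow> i \<noteq> j \<Longrightarrow> Q i j \<ge> 0"
    and z0: "\<And>i. i \<in> A \<Longrightarrow> z 0 i \<ge> 0"
    and t: "t \<ge> 0" and i: "i \<in> A"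
  shows "z t i \<ge> 0"
proof (rule field_le_epsilon)
  define K where "K = 1 + (\<Sum>i\<in>A. \<Sum>j\<in>A. \<bar>Q i j\<bar>)"
  have row_lt_K: "(\<Sum>l\<in>A. Q j l) < K" if "j \<in> A" for j
  proof -
    have "(\<Sum>l\<in>A. Q j l) \<le> (\<Sum>l\<in>A. \<bar>Q j l\<bar>)" by (rule sum_mono) auto
    also have "\<dots> \<le> (\<Sum>i\<in>A. \<Sum>l\<in>A. \<bar>Q i l\<bar>)"
      by (rule member_le_sum[OF that]) (auto intro: sum_nonneg simp: A)
    finally show ?thesis unfolding K_def by simp
  qed
  fix c :: real assume "c > 0"
  define e where "e = c / exp (K * t)"
  define p where "p j s = z s j + e * exp (K * s)" for j s
  have e: "e > 0" using \<open>c > 0\<close> by (simp add: e_def)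
  have p_deriv: "(p j has_real_derivative (\<Sum>l\<in>A. Q j l * z s l) + e * (exp (K * s) * K))
      (at s within {0..})" if "s \<ge> 0" "j \<in> A" for s j
    unfolding p_def by (rule DERIV_add[OF ode[OF that]]) (auto intro!: derivative_eq_intros)
  \<comment> \<open>The exponential term makes the barrier strict: at a first zero of \<open>p j\<close> the slope
    is at least \<open>e exp (K s) (K - \<Sum>l. Q j l) > 0\<close>.\<close>
  have "p i t > 0"
  proof (rule positivity_barrier[OF A _ _ _ t i])
    show "continuous_on {0..} (p j)" if "j \<in> A" for j
      by (rule DERIV_continuous_on) (use p_deriv that in auto)
    show "p j 0 > 0" if "j \<in> A" for j using z0[OF that] e by (simp add: p_def add_nonneg_pos)
  next
    fix j s assume j: "j \<in> A" and "s > 0" "p j s = 0" and nonneg: "\<forall>l\<in>A. p l s \<ge> 0"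
    define D where "D = (\<Sum>l\<in>A. Q j l * z s l) + e * (exp (K * s) * K)"
    have "D = (\<Sum>l\<in>A. Q j l * p l s) + e * exp (K * s) * (K - (\<Sum>l\<in>A. Q j l))"
      unfolding D_def p_def by (simp add: algebra_simps sum.distrib sum_distrib_left sum_distrib_right)
    moreover have "(\<Sum>l\<in>A. Q j l * p l s) \<ge> 0"
      using Q[OF j] nonneg \<open>p j s = 0\<close> by (intro sum_nonneg) (metis mult_nonneg_nonneg mult_zero_right)
    moreover have "e * exp (K * s) * (K - (\<Sum>l\<in>A. Q j l)) > 0" using row_lt_K[OF j] e by simp
    ultimately have "D > 0" by linarith
    have "(p j has_real_derivative D) (at s within {0<..})"
      unfolding D_def by (rule DERIV_subset[OF p_deriv[OF _ j]]) (use \<open>s > 0\<close> in auto)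
    then have "(p j has_real_derivative D) (at s)"
      using at_within_open[of s "{0<..}"] \<open>s > 0\<close> by simp
    with \<open>D > 0\<close> show "\<exists>D>0. (p j has_real_derivative D) (at s)" by blast
  qed
  then show "0 \<le> z t i + c" by (simp add: p_def e_def)
qed

section \<open>Square linear systems\<close>

lemma mat_shift_mult_vec:
  fixes K :: "nat \<Rightarrow> nat \<Rightarrow> real"
  assumes "i < n" "v \<in> carrier_vec n"
  shows "(mat n n (\<lambda>(i, j). K (Suc i) (Suc j)) *\<^sub>v v) $ i
    = (\<Sum>j\<in>{1..n}. K (Suc i) j * (if j \<in> {1..n} then v $ (j - 1) else 0))"
proof -
  have "(\<Sum>j\<in>{1..n}. K (Suc i) j * (if j \<in> {1..n} then v $ (j - 1) else 0))
      = (\<Sum>j<n. K (Suc i) (Suc j) * v $ j)"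
    using sum.atLeast1_atMost_eq[of "\<lambda>j. K (Suc i) j * (if j \<in> {1..n} then v $ (j - 1) else 0)" n]
    by (simp add: lessThan_atLeast0)
  then show ?thesis
    using assms by (auto simp: scalar_prod_def Matrix.row_def atLeast0LessThan intro!: sum.cong)
qed

lemma square_system_solvable:
  fixes K :: "nat \<Rightarrow> nat \<Rightarrow> real" and b :: "nat \<Rightarrow> real"
  assumes kernel: "\<And>x. (\<And>i. i \<in> {1..n} \<Longrightarrow> (\<Sum>j\<in>{1..n}. K i j * x j) = 0) \<Longrightarrow>
      (\<And>i. i \<in> {1..n} \<Longrightarrow> x i = 0)"
  shows "\<exists>x. (\<forall>i. i \<notin> {1..n} \<longrightarrow> x i = 0) \<and> (\<forall>i\<in>{1..n}. (\<Sum>j\<in>{1..n}. K i j * x j) = b i)"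
proof -
  define A where "A = mat n n (\<lambda>(i, j). K (Suc i) (Suc j))"
  define fun_of where "fun_of v j = (if j \<in> {1..n} then v $ (j - 1) else 0)" for v :: "real vec" and j
  have A: "A \<in> carrier_mat n n" unfolding A_def by simp
  have entry: "(\<Sum>j\<in>{1..n}. K i j * fun_of v j) = (A *\<^sub>v v) $ (i - 1)"
    if "i \<in> {1..n}" "v \<in> carrier_vec n" for i v
    using mat_shift_mult_vec[of "i - 1" n v K] that unfolding A_def fun_of_def by auto
  have "Determinant.det A \<noteq> 0"
  proof
    assume "Determinant.det A = 0"
    then obtain v where v: "v \<in> carrier_vec n" "v \<noteq> 0\<^sub>v n" "A *\<^sub>v v = 0\<^sub>v n"
      using det_0_iff_vec_prod_zero[OF A] by auto
    have zero: "fun_of v i = 0" if "i \<in> {1..n}" for i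
      by (rule kernel[OF _ that]) (use entry v in auto)
    have "v $ i = 0" if "i < n" for i
      using zero[of "Suc i"] that by (simp add: fun_of_def)
    then have "v = 0\<^sub>v n" using v(1) by (intro eq_vecI) auto
    with v show False by simp
  qed
  then obtain B where B: "B \<in> carrier_mat n n" "A * B = 1\<^sub>m n"
    using det_non_zero_imp_unit[OF A] unfolding Units_def ring_mat_def by auto
  define y where "y = B *\<^sub>v vec n (\<lambda>i. b (Suc i))"
  have y: "y \<in> carrier_vec n" unfolding y_def using B by auto
  have "A *\<^sub>v y = vec n (\<lambda>i. b (Suc i))"
    unfolding y_def using A B by (metis assoc_mult_mat_vec one_mult_mat_vec vec_carrier)
  then have "(\<Sum>j\<in>{1..n}. K i j * fun_of y j) = b i" if "i \<in> {1..n}" for i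
    using entry[OF that y] that by auto
  then show ?thesis by (intro exI[of _ "fun_of y"]) (auto simp: fun_of_def)
qed

lemma Vset_finite [simp]: "finite (Vset n)"
  unfolding Vset_def by simp

lemma graph_weight_support: "is_graph n w \<Longrightarrow> w i j \<noteq> 0 \<Longrightarrow> i \<in> Vset n \<and> j \<in> Vset n"
  unfolding is_graph_def by blast

lemma graph_weight_nonneg: "is_graph n w \<Longrightarrow> w i j \<ge> 0"
  unfolding is_graph_def by blast

lemma graph_weight_sym: "is_graph n w \<Longrightarrow> w i j = w j i"
  unfolding is_graph_def by blast

lemma graph_connected: "is_graph n w \<Longrightarrow> i \<in> Vset n \<Longrightarrow> j \<in> Vset n \<Longrightarrow> (\<lambda>a b. w a b > 0)\<^sup>*\<^sup>* i j"
  unfolding is_graph_def by blast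

lemma graph_Vset_ne: "is_graph n w \<Longrightarrow> Vset n \<noteq> {}"
  unfolding is_graph_def Vset_def by auto

lemma deg_pos:
  assumes G: "is_graph n w" and i: "i \<in> Vset n"
  shows "deg n w i > 0"
proof -
  have "n \<ge> 2" using G unfolding is_graph_def by auto
  define j where "j = (if i = 1 then 2 else 1 :: nat)"
  have j: "j \<in> Vset n" "j \<noteq> i" using \<open>n \<ge> 2\<close> i unfolding j_def Vset_def by auto
  obtain k where k: "w i k > 0"
    using graph_connected[OF G i j(1)] j(2) by (cases rule: converse_rtranclpE) auto
  then have "k \<in> Vset n" using graph_weight_support[OF G, of i k] by auto
  then have "w i k \<le> deg n w i"
    unfolding deg_def by (intro member_le_sum) (use graph_weight_nonneg[OF G] in auto)
  with k show ?thesis by simp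
qed

lemma vol_pos:
  assumes G: "is_graph n w"
  shows "vol r n w > 0"
  unfolding vol_def using graph_Vset_ne[OF G] by (intro sum_pos) (use deg_pos[OF G] in fastforce)+

definition lap_coeff :: "real \<Rightarrow> nat \<Rightarrow> (nat \<Rightarrow> nat \<Rightarrow> real) \<Rightarrow> nat \<Rightarrow> nat \<Rightarrow> real" where
  "lap_coeff r n w i j = deg n w i powr (- r) * ((if i = j then deg n w i else 0) - w i j)"

lemma lap_eq_deg_minus_sum:
  "lap r n w p i = deg n w i powr (- r) * (deg n w i * p i - (\<Sum>j\<in>Vset n. w i j * p j))"
  unfolding lap_def deg_def
  by (simp add: algebra_simps sum_subtractf sum_distrib_left sum_distrib_right)

lemma lap_eq_coeff_sum:
  assumes i: "i \<in> Vset n"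
  shows "lap r n w p i = (\<Sum>j\<in>Vset n. lap_coeff r n w i j * p j)"
proof -
  have "(\<Sum>j\<in>Vset n. lap_coeff r n w i j * p j)
      = deg n w i powr (- r) * ((\<Sum>j\<in>Vset n. if i = j then deg n w i * p j else 0)
          - (\<Sum>j\<in>Vset n. w i j * p j))"
    unfolding lap_coeff_def sum_subtractf[symmetric] sum_distrib_left
    by (intro sum.cong) (auto simp: algebra_simps)
  then show ?thesis unfolding lap_eq_deg_minus_sum using i by simp
qed

lemma lap_diff: "lap r n w (\<lambda>k. q k - p k) i = lap r n w q i - lap r n w p i"
  unfolding lap_eq_deg_minus_sum by (simp add: algebra_simps sum_subtractf)

lemma lap_uminus: "lap r n w (\<lambda>k. - p k) i = - lap r n w p i"
  unfolding lap_eq_deg_minus_sum by (simp add: algebra_simps sum_negf)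

lemma lap_lincomb:
  assumes i: "i \<in> Vset n"
  shows "lap r n w (\<lambda>k. \<Sum>j\<in>J. c j * g j k) i = (\<Sum>j\<in>J. c j * lap r n w (g j) i)"
  unfolding lap_eq_coeff_sum[OF i] sum_distrib_left
  by (subst sum.swap) (simp add: algebra_simps)

lemma lap_avg:
  assumes G: "is_graph n w"
  shows "lap r n w (avg r n w u) i = 0"
proof -
  have zero: "w i l * (avg r n w u i - avg r n w u l) = 0" for l
    using graph_weight_support[OF G, of i l] by (cases "w i l = 0") (auto simp: avg_def)
  show ?thesis unfolding lap_def zero by simp
qed

lemma lap_nonposD:
  assumes G: "is_graph n w" and i: "i \<in> Vset n" and "lap r n w p i \<le> 0"
  shows "(\<Sum>j\<in>Vset n. w i j * (p i - p j)) \<le> 0"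
  using assms deg_pos[OF G i] unfolding lap_def by (simp add: mult_le_0_iff)

lemma mass_diff: "mass r n w (\<lambda>k. q k - p k) = mass r n w q - mass r n w p"
  unfolding mass_def by (simp add: algebra_simps sum_subtractf)

lemma mass_lincomb: "mass r n w (\<lambda>k. \<Sum>j\<in>J. c j * g j k) = (\<Sum>j\<in>J. c j * mass r n w (g j))"
  unfolding mass_def sum_distrib_left by (subst sum.swap) (simp add: algebra_simps)

lemma mass_lap:
  assumes G: "is_graph n w"
  shows "mass r n w (lap r n w p) = 0"
proof -
  have "deg n w i powr r * deg n w i powr (- r) = 1" if "i \<in> Vset n" for i
    using deg_pos[OF G that] by (simp add: powr_minus)
  then have "mass r n w (lap r n w p) = (\<Sum>i\<in>Vset n. \<Sum>j\<in>Vset n. w i j * (p i - p j))"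
    unfolding mass_def lap_def by (intro sum.cong) (auto simp: mult.assoc[symmetric])
  also have "\<dots> = (\<Sum>i\<in>Vset n. \<Sum>j\<in>Vset n. w i j * p i) - (\<Sum>j\<in>Vset n. \<Sum>i\<in>Vset n. w i j * p j)"
    by (subst (2) sum.swap) (simp add: algebra_simps sum_subtractf)
  also have "\<dots> = 0"
    using graph_weight_sym[OF G] by simp
  finally show ?thesis .
qed

lemma mass_minus_avg:
  assumes G: "is_graph n w"
  shows "mass r n w (\<lambda>i. u i - avg r n w u i) = 0"
proof -
  have "mass r n w (\<lambda>i. u i - avg r n w u i)
      = (\<Sum>i\<in>Vset n. deg n w i powr r * (u i - mass r n w u / vol r n w))"
    unfolding mass_def[of r n w "\<lambda>i. u i - avg r n w u i"] by (intro sum.cong) (auto simp: avg_def)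
  also have "\<dots> = mass r n w u - vol r n w * (mass r n w u / vol r n w)"
    unfolding mass_def[of r n w u] vol_def
    by (simp add: right_diff_distrib sum_subtractf sum_distrib_right sum_divide_distrib)
  finally show ?thesis using vol_pos[OF G, of r] by simp
qed

section \<open>Maximum principle\<close>

lemma max_spreads_along_edges:
  assumes G: "is_graph n w" and i0: "i0 \<in> Vset n"
    and max: "\<And>j. j \<in> Vset n \<Longrightarrow> p j \<le> p i0"
    and sub: "\<And>i. i \<in> Vset n \<Longrightarrow> p i = p i0 \<Longrightarrow> (\<Sum>j\<in>Vset n. w i j * (p i - p j)) \<le> 0"
    and j: "j \<in> Vset n"
  shows "p j = p i0"
  using graph_connected[OF G i0 j]
proof (induction rule: rtranclp_induct)
  case (step y z)
  have yz: "y \<in> Vset n" "z \<in> Vset n" using graph_weight_support[OF G, of y z] step(2) by auto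
  have nonneg: "\<forall>k\<in>Vset n. 0 \<le> w y k * (p y - p k)"
    using max step(3) graph_weight_nonneg[OF G] by auto
  moreover from nonneg have "(\<Sum>k\<in>Vset n. w y k * (p y - p k)) \<ge> 0" by (simp add: sum_nonneg)
  ultimately have "(\<Sum>k\<in>Vset n. w y k * (p y - p k)) = 0"
    using sub[OF yz(1) step(3)] by linarith
  then have "w y z * (p y - p z) = 0"
    using sum_nonneg_eq_0_iff[of "Vset n" "\<lambda>k. w y k * (p y - p k)"] nonneg yz by auto
  with step(2,3) show ?case by auto
qed simp

lemma exists_max_on_Vset:
  assumes G: "is_graph n w"
  obtains i0 where "i0 \<in> Vset n" "\<And>j. j \<in> Vset n \<Longrightarrow> (p :: nat \<Rightarrow> real) j \<le> p i0"
proof -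
  have "Max (p ` Vset n) \<in> p ` Vset n" using graph_Vset_ne[OF G] by (intro Max_in) auto
  then obtain i0 where "i0 \<in> Vset n" "p i0 = Max (p ` Vset n)" by auto
  moreover have "p j \<le> Max (p ` Vset n)" if "j \<in> Vset n" for j using that by simp
  ultimately show thesis using that by simp
qed

lemma harmonic_imp_const:
  assumes G: "is_graph n w" and harm: "\<And>i. i \<in> Vset n \<Longrightarrow> lap r n w p i = 0"
  obtains c where "\<And>j. j \<in> Vset n \<Longrightarrow> p j = c"
proof -
  obtain i0 where i0: "i0 \<in> Vset n" "\<And>j. j \<in> Vset n \<Longrightarrow> p j \<le> p i0"
    using exists_max_on_Vset[OF G] by blast
  have sub: "(\<Sum>j\<in>Vset n. w i j * (p i - p j)) \<le> 0" if "i \<in> Vset n" for i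
    using lap_nonposD[where r=r, OF G that] harm[OF that] by simp
  have "p j = p i0" if "j \<in> Vset n" for j
    using max_spreads_along_edges[where p=p, OF G i0(1)] i0(2) sub that by blast
  then show thesis using that by blast
qed

lemma harmonic_mass_zero_imp_zero:
  assumes G: "is_graph n w" and harm: "\<And>i. i \<in> Vset n \<Longrightarrow> lap r n w p i = 0"
    and mass: "mass r n w p = 0" and j: "j \<in> Vset n"
  shows "p j = 0"
proof -
  obtain c where c: "\<And>j. j \<in> Vset n \<Longrightarrow> p j = c" using harmonic_imp_const[OF G harm] by blast
  then have "mass r n w p = c * vol r n w"
    unfolding mass_def vol_def by (simp add: sum_distrib_left mult.commute)
  with mass vol_pos[OF G, of r] c[OF j] show ?thesis by simp
qed

lemma dirichlet_harmonic_nonpos: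
  assumes G: "is_graph n w" and j0: "j0 \<in> Vset n - S"
    and harm: "\<And>i. i \<in> S \<Longrightarrow> lap r n w p i = 0"
    and boundary: "\<And>i. i \<in> Vset n - S \<Longrightarrow> p i = 0" and j: "j \<in> Vset n"
  shows "p j \<le> 0"
proof (rule ccontr)
  assume "\<not> p j \<le> 0"
  obtain i0 where i0: "i0 \<in> Vset n" "\<And>j. j \<in> Vset n \<Longrightarrow> p j \<le> p i0"
    using exists_max_on_Vset[OF G] by blast
  have pos: "p i0 > 0" using i0(2)[OF j] \<open>\<not> p j \<le> 0\<close> by simp
  have "(\<Sum>j\<in>Vset n. w i j * (p i - p j)) \<le> 0" if "i \<in> Vset n" "p i = p i0" for i
  proof -
    have "i \<in> S" using that boundary pos by force
    then show ?thesis by (intro lap_nonposD[where r=r, OF G that(1)]) (simp add: harm)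
  qed
  then have "p j0 = p i0" using max_spreads_along_edges[where p=p, OF G i0] j0 by blast
  with boundary[OF j0] pos show False by simp
qed

lemma dirichlet_harmonic_zero:
  assumes G: "is_graph n w" and j0: "j0 \<in> Vset n - S"
    and harm: "\<And>i. i \<in> S \<Longrightarrow> lap r n w p i = 0"
    and boundary: "\<And>i. i \<in> Vset n - S \<Longrightarrow> p i = 0" and j: "j \<in> Vset n"
  shows "p j = 0"
proof -
  have "p j \<le> 0" by (rule dirichlet_harmonic_nonpos[OF G j0 harm boundary j])
  moreover have "- p j \<le> 0"
    using dirichlet_harmonic_nonpos[OF G j0, of r "\<lambda>k. - p k" j] harm boundary j
    by (simp add: lap_uminus)
  ultimately show ?thesis by simp
qed

section \<open>Equilibrium measures and the potential\<close>

lemma eqmeas_exists: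
  assumes G: "is_graph n w" and S: "S \<subseteq> Vset n" and j0: "j0 \<in> Vset n - S"
  shows "\<exists>\<nu>. onV n \<nu> \<and> (\<forall>i\<in>S. lap r n w \<nu> i = 1) \<and> (\<forall>i\<in>Vset n - S. \<nu> i = 0)"
proof -
  define K where "K i j = (if i \<in> S then lap_coeff r n w i j else if i = j then 1 else 0)" for i j
  have K: "(\<Sum>j\<in>Vset n. K i j * x j) = (if i \<in> S then lap r n w x i else x i)"
    if "i \<in> Vset n" for i x
  proof (cases "i \<in> S")
    case False
    then have "(\<Sum>j\<in>Vset n. K i j * x j) = (\<Sum>j\<in>Vset n. if i = j then x j else 0)"
      by (intro sum.cong) (auto simp: K_def)
    with that False show ?thesis by simp
  qed (simp add: K_def lap_eq_coeff_sum that)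
  have "\<exists>x. (\<forall>i. i \<notin> Vset n \<longrightarrow> x i = 0) \<and>
      (\<forall>i\<in>Vset n. (\<Sum>j\<in>Vset n. K i j * x j) = (if i \<in> S then 1 else 0))"
    unfolding Vset_def
  proof (rule square_system_solvable)
    fix x i assume ker: "\<And>i. i \<in> {1..n} \<Longrightarrow> (\<Sum>j\<in>{1..n}. K i j * x j) = 0" and i: "i \<in> {1..n}"
    have hom: "(if i \<in> S then lap r n w x i else x i) = 0" if "i \<in> Vset n" for i
      using ker[of i] K[OF that, of x] that unfolding Vset_def by simp
    have harm: "lap r n w x k = 0" if "k \<in> S" for k using hom[of k] that S by auto
    have boundary: "x k = 0" if "k \<in> Vset n - S" for k using hom[of k] that by auto
    show "x i = 0"
      using dirichlet_harmonic_zero[OF G j0 harm boundary] i by (simp add: Vset_def)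
  qed
  then obtain x where x: "onV n x"
    and sys: "\<And>i. i \<in> Vset n \<Longrightarrow> (if i \<in> S then lap r n w x i else x i) = (if i \<in> S then 1 else 0)"
    unfolding onV_def using K by auto
  have "lap r n w x i = 1" if "i \<in> S" for i using sys[of i] that S by auto
  moreover have "x i = 0" if "i \<in> Vset n - S" for i using sys[of i] that by auto
  ultimately show ?thesis using x by blast
qed

lemma eqmeas_spec:
  assumes G: "is_graph n w" and S: "S \<subseteq> Vset n" and j0: "j0 \<in> Vset n - S"
  shows "onV n (eqmeas r n w S)" "\<And>i. i \<in> S \<Longrightarrow> lap r n w (eqmeas r n w S) i = 1"
    "\<And>i. i \<in> Vset n - S \<Longrightarrow> eqmeas r n w S i = 0"
proof -
  obtain \<nu> where \<nu>: "onV n \<nu> \<and> (\<forall>i\<in>S. lap r n w \<nu> i = 1) \<and> (\<forall>i\<in>Vset n - S. \<nu> i = 0)"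
    using eqmeas_exists[OF G S j0] by blast
  have "eqmeas r n w S = \<nu>"
    unfolding eqmeas_def
  proof (rule the_equality)
    fix \<mu> assume \<mu>: "onV n \<mu> \<and> (\<forall>i\<in>S. lap r n w \<mu> i = 1) \<and> (\<forall>i\<in>Vset n - S. \<mu> i = 0)"
    have "\<mu> i - \<nu> i = 0" if "i \<in> Vset n" for i
      by (rule dirichlet_harmonic_zero[OF G j0, of r "\<lambda>k. \<mu> k - \<nu> k"])
        (use \<mu> \<nu> that in \<open>auto simp: lap_diff\<close>)
    with \<mu> \<nu> show "\<mu> = \<nu>" unfolding onV_def by fastforce
  qed (rule \<nu>)
  with \<nu> show "onV n (eqmeas r n w S)" "\<And>i. i \<in> S \<Longrightarrow> lap r n w (eqmeas r n w S) i = 1"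
    "\<And>i. i \<in> Vset n - S \<Longrightarrow> eqmeas r n w S i = 0" by auto
qed

lemma lap_fj:
  assumes G: "is_graph n w" and j: "j \<in> Vset n" and i: "i \<in> Vset n"
  shows "lap r n w (fj r n w j) i = (if i = j then 1 - vol r n w / deg n w j powr r else 1)"
proof -
  define \<nu> where "\<nu> = eqmeas r n w (Vset n - {j})"
  have \<nu>: "\<And>i. i \<in> Vset n - {j} \<Longrightarrow> lap r n w \<nu> i = 1"
    unfolding \<nu>_def by (rule eqmeas_spec(2)[OF G, of _ j]) (use j in auto)
  have "fj r n w j = (\<lambda>k. \<nu> k - avg r n w \<nu> k)"
    by (simp add: fj_def \<nu>_def fun_eq_iff)
  then have lap_\<nu>: "lap r n w (fj r n w j) k = lap r n w \<nu> k" for k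
    by (simp add: lap_diff lap_avg[OF G])
  have "0 = mass r n w (lap r n w \<nu>)" using mass_lap[OF G] by simp
  also have "\<dots> = deg n w j powr r * lap r n w \<nu> j + (vol r n w - deg n w j powr r)"
    using j \<nu> by (simp add: mass_def vol_def sum.remove)
  finally have "lap r n w \<nu> j = 1 - vol r n w / deg n w j powr r"
    using deg_pos[OF G j] by (simp add: field_simps)
  with \<nu> i show ?thesis unfolding lap_\<nu> by auto
qed

lemma mass_fj:
  assumes G: "is_graph n w"
  shows "mass r n w (fj r n w j) = 0"
  using mass_minus_avg[OF G] unfolding fj_def by simp

lemma fj_outside_Vset:
  assumes G: "is_graph n w" and j: "j \<in> Vset n" and i: "i \<notin> Vset n"
  shows "fj r n w j i = 0"
  using eqmeas_spec(1)[OF G, of "Vset n - {j}" j r] j i unfolding fj_def onV_def avg_def by auto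

lemma phi_eqI:
  assumes G: "is_graph n w" and p: "onV n p" "\<And>i. i \<in> Vset n \<Longrightarrow> lap r n w p i = u i - avg r n w u i"
    "mass r n w p = 0"
  shows "phi r n w u = p"
  unfolding phi_def
proof (rule the_equality)
  fix q assume q: "onV n q \<and> (\<forall>i\<in>Vset n. lap r n w q i = u i - avg r n w u i) \<and> mass r n w q = 0"
  have "q i - p i = 0" if "i \<in> Vset n" for i
    by (rule harmonic_mass_zero_imp_zero[OF G, of r "\<lambda>k. q k - p k"])
      (use q p that in \<open>auto simp: lap_diff mass_diff\<close>)
  with p q show "q = p" unfolding onV_def by fastforce
qed (use p in auto)

lemma phi_eq_fj_combination:
  assumes G: "is_graph n w"
  shows "phi r n w u = (\<lambda>i. \<Sum>j\<in>Vset n. (- (deg n w j powr r / vol r n w) * u j) * fj r n w j i)"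
    (is "_ = ?p")
proof (rule phi_eqI[OF G])
  show "onV n ?p" unfolding onV_def using fj_outside_Vset[OF G] by simp
  show "mass r n w ?p = 0" unfolding mass_lincomb using mass_fj[OF G] by simp
  fix i assume i: "i \<in> Vset n"
  have "(- (deg n w j powr r / vol r n w) * u j) * lap r n w (fj r n w j) i
      = (if i = j then u j else 0) - deg n w j powr r * u j / vol r n w" if "j \<in> Vset n" for j
    using lap_fj[OF G that i] deg_pos[OF G that] vol_pos[OF G, of r] by (auto simp: field_simps)
  then have "lap r n w ?p i
      = (\<Sum>j\<in>Vset n. (if i = j then u j else 0) - deg n w j powr r * u j / vol r n w)"
    unfolding lap_lincomb[OF i] by simp
  also have "\<dots> = u i - avg r n w u i"
    using i by (simp add: sum_subtractf mass_def avg_def sum_divide_distrib)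
  finally show "lap r n w ?p i = u i - avg r n w u i" .
qed

section \<open>The generator \<open>-L\<close> as a Metzler matrix\<close>

definition neg_Lop_coeff :: "real \<Rightarrow> real \<Rightarrow> nat \<Rightarrow> (nat \<Rightarrow> nat \<Rightarrow> real) \<Rightarrow> nat \<Rightarrow> nat \<Rightarrow> real" where
  "neg_Lop_coeff r \<gamma> n w i j = - lap_coeff r n w i j + \<gamma> * deg n w j powr r / vol r n w * fj r n w j i"

lemma Cgamma_imp_graph: "Cgamma r \<gamma> n w \<Longrightarrow> is_graph n w"
  unfolding Cgamma_def C0_def by (auto split: if_splits)

lemma neg_Lop_eq_coeff_sum:
  assumes G: "is_graph n w" and i: "i \<in> Vset n"
  shows "- Lop r \<gamma> n w u i = (\<Sum>j\<in>Vset n. neg_Lop_coeff r \<gamma> n w i j * u j)"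
  unfolding Lop_def neg_Lop_coeff_def phi_eq_fj_combination[OF G] lap_eq_coeff_sum[OF i]
  by (simp add: algebra_simps sum.distrib sum_distrib_left sum_negf sum_subtractf)

lemma neg_Lop_coeff_nonneg:
  assumes G: "Cgamma r \<gamma> n w" and g: "\<gamma> \<ge> 0"
    and i: "i \<in> Vset n" and j: "j \<in> Vset n" and ij: "i \<noteq> j"
  shows "neg_Lop_coeff r \<gamma> n w i j \<ge> 0"
proof -
  have Gr: "is_graph n w" using G by (rule Cgamma_imp_graph)
  have coeff: "neg_Lop_coeff r \<gamma> n w i j
      = deg n w i powr (- r) * w i j + \<gamma> * deg n w j powr r / vol r n w * fj r n w j i"
    unfolding neg_Lop_coeff_def lap_coeff_def using ij by simp
  have weight_term: "deg n w i powr (- r) * w i j \<ge> 0" using graph_weight_nonneg[OF Gr] by simp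
  show ?thesis
  proof (cases "\<gamma> = 0")
    case True
    with coeff weight_term show ?thesis by simp
  next
    case False
    with G have "C0 r n w" and C: "\<forall>j\<in>Vset n. \<forall>i\<in>Vset n. i \<noteq> j \<longrightarrow> w i j = 0 \<or>
        deg n w i powr (- r) * w i j + \<gamma> * deg n w j powr r / vol r n w * fj r n w j i > 0"
      unfolding Cgamma_def by simp_all
    show ?thesis
    proof (cases "w i j = 0")
      case True
      from \<open>C0 r n w\<close> have "\<forall>j\<in>Vset n. \<forall>i\<in>Vset n. i \<noteq> j \<longrightarrow> w i j > 0 \<or> fj r n w j i \<ge> 0"
        unfolding C0_def by blast
      with True i j ij have "fj r n w j i \<ge> 0" by fastforce
      moreover have "\<gamma> * deg n w j powr r / vol r n w \<ge> 0" using g vol_pos[OF Gr, of r] by simp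
      ultimately have "\<gamma> * deg n w j powr r / vol r n w * fj r n w j i \<ge> 0"
        by (rule mult_nonneg_nonneg[rotated])
      with True show ?thesis unfolding coeff by simp
    next
      case False
      then show ?thesis using C[rule_format, OF j i ij] coeff by simp
    qed
  qed
qed

theorem lemma6p27:
  fixes r \<gamma> :: real and n :: nat and w :: "nat \<Rightarrow> nat \<Rightarrow> real"
    and u v :: "real \<Rightarrow> nat \<Rightarrow> real" and u0 v0 :: "nat \<Rightarrow> real"
  assumes r: "0 \<le> r" "r \<le> 1"
    and g: "\<gamma> \<ge> 0"
    and G: "Cgamma r \<gamma> n w"
    and u_ode: "\<And>t i. t \<ge> 0 \<Longrightarrow> i \<in> Vset n \<Longrightarrow>
        ((\<lambda>s. u s i) has_real_derivative (- Lop r \<gamma> n w (u t) i)) (at t within {0..})"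
    and u_C1: "\<And>i. i \<in> Vset n \<Longrightarrow> continuous_on {0..} (\<lambda>t. - Lop r \<gamma> n w (u t) i)"
    and u_init: "\<And>i. i \<in> Vset n \<Longrightarrow> u 0 i = u0 i"
    and v_ode: "\<And>t i. t \<ge> 0 \<Longrightarrow> i \<in> Vset n \<Longrightarrow>
        ((\<lambda>s. v s i) has_real_derivative (- Lop r \<gamma> n w (v t) i)) (at t within {0..})"
    and v_C1: "\<And>i. i \<in> Vset n \<Longrightarrow> continuous_on {0..} (\<lambda>t. - Lop r \<gamma> n w (v t) i)"
    and v_init: "\<And>i. i \<in> Vset n \<Longrightarrow> v 0 i = v0 i"
    and le0: "\<And>i. i \<in> Vset n \<Longrightarrow> u0 i \<le> v0 i"
  shows "\<forall>t\<ge>0. \<forall>i\<in>Vset n. u t i \<le> v t i"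
proof (intro allI impI ballI)
  fix t :: real and i assume t: "t \<ge> 0" and i: "i \<in> Vset n"
  have Gr: "is_graph n w" using G by (rule Cgamma_imp_graph)
  have ode: "((\<lambda>s. v s k - u s k) has_real_derivative
      (\<Sum>j\<in>Vset n. neg_Lop_coeff r \<gamma> n w k j * (v s j - u s j))) (at s within {0..})"
    if "s \<ge> 0" "k \<in> Vset n" for s k
    using DERIV_diff[OF v_ode[OF that] u_ode[OF that]]
    unfolding neg_Lop_eq_coeff_sum[OF Gr that(2)] by (simp add: algebra_simps sum_subtractf)
  have "0 \<le> (\<lambda>s k. v s k - u s k) t i"
    by (rule metzler_linear_ode_nonneg[where Q = "neg_Lop_coeff r \<gamma> n w", OF Vset_finite ode _ _ t i])
      (use neg_Lop_coeff_nonneg[OF G g] u_init v_init le0 in auto)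
  then show "u t i \<le> v t i" by simp
qed

end
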